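(* Let $F$ be a $C^1$ function on $\mathbb R$ with $\lim_{x\to-\infty}F(x)=-1$ and $\lim_{x\to+\infty}F(x)=1$. If $f\in C^2(\mathbb T,\mathbb R)$ is non-degenerate, then $$\mathcal H^0(\{f=0\})=-\frac12\int_0^{2\pi}F'\Big(\frac{f'(x)}{f(x)}\Big)\Big(\frac{f'(x)}{f(x)}\Big)'\,dx,$$ where the integrand is defined at points with $f(x)\neq0$ and the integral is understood as the sum of the (improper) integrals over the finitely many open arcs between consecutive zeros of $f$.
   Context: $\mathbb T=\mathbb R/2\pi\mathbb Z$, functions on $\mathbb T$ are identified with $2\pi$-periodic functions on $\mathbb R$, and $\mathcal H^0(\{f=0\})$ is the number of zeros of $f$ in one period $[0,2\pi)$. Set $\eta_f(x):=\sqrt{f(x)^2+f'(x)^2}$; $f$ is non-degenerate if $\min_x\eta_f(x)>0$. *)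

theory Defs
  imports "HOL-Analysis.Analysis"
begin

text \<open>eta_f(x) = sqrt(f(x)^2 + f'(x)^2); f is non-degenerate iff min eta_f > 0
  (the minimum exists by periodicity and continuity; we state it as a positive lower bound).\<close>
definition eta :: "(real \<Rightarrow> real) \<Rightarrow> (real \<Rightarrow> real) \<Rightarrow> real \<Rightarrow> real" where
  "eta f f' x = sqrt ((f x)\<^sup>2 + (f' x)\<^sup>2)"

definition nondegenerate :: "(real \<Rightarrow> real) \<Rightarrow> (real \<Rightarrow> real) \<Rightarrow> bool" where
  "nondegenerate f f' \<longleftrightarrow> (\<exists>c>0. \<forall>x. c \<le> eta f f' x)"

definition improper_has_integral :: "(real \<Rightarrow> real) \<Rightarrow> real \<Rightarrow> real \<Rightarrow> real \<Rightarrow> bool" where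
  "improper_has_integral h L a b \<longleftrightarrow>
     (\<forall>c d. a < c \<and> c \<le> d \<and> d < b \<longrightarrow> h integrable_on {c..d}) \<and>
     ((\<lambda>(c, d). integral {c..d} h) \<longlongrightarrow> L) (at_right a \<times>\<^sub>F at_left b)"

definition next_zero :: "(real \<Rightarrow> real) \<Rightarrow> real \<Rightarrow> real" where
  "next_zero f z = Inf {w. z < w \<and> f w = 0}"

end

theory Submission
  imports Defs
begin

text \<open>On an arc \<open>(z, w)\<close> between consecutive zeros of \<open>f\<close>, \<open>F (f'/f)\<close> is an antiderivative
  of the integrand. Near a simple zero \<open>z\<close> the logarithmic derivative \<open>f'/f\<close> behaves like
  \<open>1/(x - z)\<close>, so it tends to \<open>+\<infinity>\<close> just right of a zero and to \<open>-\<infinity>\<close> just left of one;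
  hence \<open>F (f'/f)\<close> falls from \<open>1\<close> to \<open>-1\<close> along every arc, which contributes \<open>-2\<close>.
  Without zeros the integral is the increment of \<open>F (f'/f)\<close> over a period, i.e. \<open>0\<close>.\<close>

lemma has_real_derivative_comp_log_deriv:
  assumes "(f has_real_derivative f' x) (at x)" and "(f' has_real_derivative f'' x) (at x)"
    and "(F has_real_derivative F' (f' x / f x)) (at (f' x / f x))" and "f x \<noteq> 0"
  shows "((\<lambda>y. F (f' y / f y)) has_real_derivative
           F' (f' x / f x) * deriv (\<lambda>y. f' y / f y) x) (at x)"
proof -
  have log_deriv: "((\<lambda>y. f' y / f y) has_real_derivative
      (f'' x * f x - f' x * f' x) / (f x * f x)) (at x)"
    by (rule DERIV_divide[OF assms(2,1,4)])
  then show ?thesis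
    using DERIV_chain2[OF assms(3) log_deriv] by (simp add: DERIV_imp_deriv)
qed

lemma has_integral_comp_log_deriv:
  assumes "a \<le> b"
    and f_deriv: "\<And>x. x \<in> {a..b} \<Longrightarrow> (f has_real_derivative f' x) (at x)"
    and f'_deriv: "\<And>x. x \<in> {a..b} \<Longrightarrow> (f' has_real_derivative f'' x) (at x)"
    and F_deriv: "\<And>y. (F has_real_derivative F' y) (at y)"
    and nonzero: "\<And>x. x \<in> {a..b} \<Longrightarrow> f x \<noteq> 0"
  shows "((\<lambda>x. F' (f' x / f x) * deriv (\<lambda>y. f' y / f y) x) has_integral
           F (f' b / f b) - F (f' a / f a)) {a..b}"
proof (rule fundamental_theorem_of_calculus[OF \<open>a \<le> b\<close>])
  fix x assume x: "x \<in> {a..b}"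
  have "((\<lambda>y. F (f' y / f y)) has_real_derivative
          F' (f' x / f x) * deriv (\<lambda>y. f' y / f y) x) (at x)"
    using f_deriv[OF x] f'_deriv[OF x] F_deriv nonzero[OF x]
    by (rule has_real_derivative_comp_log_deriv[where F = F and F' = F'])
  then show "((\<lambda>y. F (f' y / f y)) has_vector_derivative
               F' (f' x / f x) * deriv (\<lambda>y. f' y / f y) x) (at x within {a..b})"
    by (simp add: has_real_derivative_iff_has_vector_derivative[symmetric] has_field_derivative_at_within)
qed

lemma simple_zero_quotient_tendsto:
  fixes f f' :: "real \<Rightarrow> real"
  assumes "(f has_real_derivative f' z) (at z)" and "isCont f' z" and "f z = 0" and "f' z \<noteq> 0"
  shows "((\<lambda>x. (f x / f' x) / (x - z)) \<longlongrightarrow> 1) (at z)"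
proof -
  have "((\<lambda>x. (f x - f z) / (x - z)) \<longlongrightarrow> f' z) (at z)"
    using assms(1) by (simp add: DERIV_def has_field_derivative_iff)
  then have "((\<lambda>x. ((f x - f z) / (x - z)) / f' x) \<longlongrightarrow> f' z / f' z) (at z)"
    using assms(2,4) by (intro tendsto_divide) (auto simp: isCont_def)
  then show ?thesis
    using assms(3,4) by (simp add: mult.commute)
qed

lemma log_deriv_filterlim_at_simple_zero:
  fixes f f' :: "real \<Rightarrow> real"
  assumes "(f has_real_derivative f' z) (at z)" and "isCont f' z" and "f z = 0" and "f' z \<noteq> 0"
  shows "filterlim (\<lambda>x. f' x / f x) at_top (at_right z)"
    and "filterlim (\<lambda>x. f' x / f x) at_bot (at_left z)"
proof -
  define q where "q x = f x / f' x" for x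
  have "(q \<longlongrightarrow> f z / f' z) (at z)"
    unfolding q_def using assms(1,2,4)
    by (intro tendsto_divide) (auto simp: isCont_def dest: DERIV_isCont)
  then have q_to_zero: "(q \<longlongrightarrow> 0) (at z)"
    using assms(3) by simp
  have "eventually (\<lambda>x. 0 < q x / (x - z)) (at z)"
    using simple_zero_quotient_tendsto[OF assms] unfolding q_def
    by (rule order_tendstoD) simp
  then have right: "eventually (\<lambda>x. 0 < q x / (x - z)) (at_right z)"
    and left: "eventually (\<lambda>x. 0 < q x / (x - z)) (at_left z)"
    by (auto intro: filter_leD[OF at_within_le_at])
  have "eventually (\<lambda>x. 0 < q x) (at_right z)"
    using right eventually_at_right_less[of z]
    by eventually_elim (simp add: zero_less_divide_iff)
  then show "filterlim (\<lambda>x. f' x / f x) at_top (at_right z)"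
    using filterlim_inverse_at_top[OF tendsto_mono[OF at_within_le_at q_to_zero]]
    by (simp add: q_def)
  have "eventually (\<lambda>x. x < z) (at_left z)"
    by (simp add: eventually_at_filter)
  with left have "eventually (\<lambda>x. q x < 0) (at_left z)"
    by eventually_elim (auto simp: zero_less_divide_iff)
  then show "filterlim (\<lambda>x. f' x / f x) at_bot (at_left z)"
    using filterlim_inverse_at_bot[OF tendsto_mono[OF at_within_le_at q_to_zero]]
    by (simp add: q_def)
qed

lemma next_zero_properties:
  fixes f :: "real \<Rightarrow> real"
  assumes "continuous_on UNIV f" and isolated: "eventually (\<lambda>x. f x \<noteq> 0) (at_right z)"
    and "z < w" and "f w = 0"
  shows next_zero_gt: "z < next_zero f z"
    and next_zero_root: "f (next_zero f z) = 0"
    and next_zero_nonzero: "\<And>x. z < x \<Longrightarrow> x < next_zero f z \<Longrightarrow> f x \<noteq> 0"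
proof -
  obtain b where "z < b" and b: "\<And>x. z < x \<Longrightarrow> x < b \<Longrightarrow> f x \<noteq> 0"
    using isolated unfolding eventually_at_right_field by blast
  define S where "S = {w. b \<le> w \<and> f w = 0}"
  have next_zero_eq: "next_zero f z = Inf S"
    unfolding next_zero_def S_def using \<open>z < b\<close> b by (metis not_le order_less_le_trans)
  have "closed S"
    unfolding S_def using assms(1)
    by (intro closed_Collect_conj closed_Collect_le closed_Collect_eq continuous_intros)
  moreover have "w \<in> S"
    unfolding S_def using assms(3,4) b by force
  moreover have below: "bdd_below S"
    unfolding S_def by (rule bdd_belowI[of _ b]) auto
  ultimately have "Inf S \<in> S"
    using closed_contains_Inf by blast
  then show "z < next_zero f z" and "f (next_zero f z) = 0"
    using \<open>z < b\<close> unfolding next_zero_eq S_def by auto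
  fix x assume "z < x" and "x < next_zero f z"
  then show "f x \<noteq> 0"
    using b cInf_lower[OF _ below, of x] unfolding next_zero_eq S_def by force
qed

lemma improper_has_integral_of_antiderivative:
  assumes "a < b"
    and antideriv: "\<And>c d. a < c \<Longrightarrow> c \<le> d \<Longrightarrow> d < b \<Longrightarrow> (h has_integral G d - G c) {c..d}"
    and "(G \<longlongrightarrow> A) (at_right a)" and "(G \<longlongrightarrow> B) (at_left b)"
  shows "improper_has_integral h (B - A) a b"
  unfolding improper_has_integral_def
proof
  show "\<forall>c d. a < c \<and> c \<le> d \<and> d < b \<longrightarrow> h integrable_on {c..d}"
    using antideriv by blast
  obtain m where "a < m" "m < b"
    using \<open>a < b\<close> dense by blast
  then have "eventually (\<lambda>c. a < c \<and> c < m) (at_right a)"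
    and "eventually (\<lambda>d. m < d \<and> d < b) (at_left b)"
    unfolding eventually_at_right_field eventually_at_left_field by auto
  then have "eventually (\<lambda>p. G (snd p) - G (fst p) = integral {fst p..snd p} h)
      (at_right a \<times>\<^sub>F at_left b)"
    unfolding eventually_prod_filter
    by (force intro!: integral_unique[symmetric] antideriv)
  moreover have "((\<lambda>p. G (snd p) - G (fst p)) \<longlongrightarrow> B - A) (at_right a \<times>\<^sub>F at_left b)"
    using assms(3,4)
    by (intro tendsto_diff filterlim_compose[OF _ filterlim_snd] filterlim_compose[OF _ filterlim_fst])
  ultimately show "((\<lambda>(c, d). integral {c..d} h) \<longlongrightarrow> B - A) (at_right a \<times>\<^sub>F at_left b)"
    unfolding case_prod_beta by (rule Lim_transform_eventually[rotated])
qed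

lemma periodic_derivative:
  assumes "\<And>x. f (x + p) = f x" and "\<And>x. (f has_real_derivative f' x) (at x)"
  shows "f' (x + p) = f' x"
proof -
  have "((\<lambda>y. f (y + p)) has_real_derivative f' (x + p)) (at x)"
    using assms(2) DERIV_shift by blast
  then have "(f has_real_derivative f' (x + p)) (at x)"
    using assms(1) by simp
  then show ?thesis
    using assms(2) by (rule DERIV_unique)
qed

lemma nondegenerate_simple_zero:
  assumes "nondegenerate f f'" and "f x = 0"
  shows "f' x \<noteq> 0"
proof
  assume "f' x = 0"
  then have "eta f f' x = 0"
    using assms(2) by (simp add: eta_def)
  then show False
    using assms(1) unfolding nondegenerate_def by (metis not_le)
qed

lemma improper_has_integral_between_consecutive_zeros:
  fixes F F' f f' f'' :: "real \<Rightarrow> real"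
  assumes F_deriv: "\<And>y. (F has_real_derivative F' y) (at y)"
    and F_bot: "(F \<longlongrightarrow> -1) at_bot" and F_top: "(F \<longlongrightarrow> 1) at_top"
    and f_deriv: "\<And>x. (f has_real_derivative f' x) (at x)"
    and f'_deriv: "\<And>x. (f' has_real_derivative f'' x) (at x)"
    and simple: "\<And>x. f x = 0 \<Longrightarrow> f' x \<noteq> 0"
    and "f z = 0" and "z < w" and "f w = 0"
  shows "improper_has_integral (\<lambda>x. F' (f' x / f x) * deriv (\<lambda>y. f' y / f y) x)
           (-2) z (next_zero f z)"
proof -
  have f'_cont: "isCont f' x" for x
    using f'_deriv by (rule DERIV_isCont)
  have log_deriv_lim: "filterlim (\<lambda>x. f' x / f x) at_top (at_right x)"
      "filterlim (\<lambda>x. f' x / f x) at_bot (at_left x)" if "f x = 0" for x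
    using log_deriv_filterlim_at_simple_zero[OF f_deriv f'_cont that simple[OF that]] by blast+
  have "eventually (\<lambda>x. 0 < f' x / f x) (at_right z)"
    using log_deriv_lim(1)[OF \<open>f z = 0\<close>] by (simp add: filterlim_at_top_dense)
  then have isolated: "eventually (\<lambda>x. f x \<noteq> 0) (at_right z)"
    by eventually_elim auto
  have f_cont: "continuous_on UNIV f"
    using f_deriv by (meson DERIV_isCont continuous_at_imp_continuous_on)
  note following_zero = next_zero_properties[OF f_cont isolated \<open>z < w\<close> \<open>f w = 0\<close>]
  have "((\<lambda>x. F' (f' x / f x) * deriv (\<lambda>y. f' y / f y) x) has_integral
          F (f' d / f d) - F (f' c / f c)) {c..d}"
    if "z < c" "c \<le> d" "d < next_zero f z" for c d
    using that by (intro has_integral_comp_log_deriv[OF _ f_deriv f'_deriv F_deriv]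
        following_zero(3)) auto
  moreover have "((\<lambda>x. F (f' x / f x)) \<longlongrightarrow> 1) (at_right z)"
    using F_top log_deriv_lim(1)[OF \<open>f z = 0\<close>] by (rule filterlim_compose)
  moreover have "((\<lambda>x. F (f' x / f x)) \<longlongrightarrow> -1) (at_left (next_zero f z))"
    using F_bot log_deriv_lim(2)[OF following_zero(2)] by (rule filterlim_compose)
  ultimately have "improper_has_integral (\<lambda>x. F' (f' x / f x) * deriv (\<lambda>y. f' y / f y) x)
      (-1 - 1) z (next_zero f z)"
    by (intro improper_has_integral_of_antiderivative[OF following_zero(1)])
  then show ?thesis
    by simp
qed

lemma has_integral_comp_log_deriv_over_period:
  fixes F F' f f' f'' :: "real \<Rightarrow> real"
  assumes "0 \<le> p"
    and F_deriv: "\<And>y. (F has_real_derivative F' y) (at y)"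
    and f_deriv: "\<And>x. (f has_real_derivative f' x) (at x)"
    and f'_deriv: "\<And>x. (f' has_real_derivative f'' x) (at x)"
    and f_per: "\<And>x. f (x + p) = f x"
    and nonzero: "\<And>x. x \<in> {a..a + p} \<Longrightarrow> f x \<noteq> 0"
  shows "((\<lambda>x. F' (f' x / f x) * deriv (\<lambda>y. f' y / f y) x) has_integral 0) {a..a + p}"
proof -
  have "((\<lambda>x. F' (f' x / f x) * deriv (\<lambda>y. f' y / f y) x) has_integral
          F (f' (a + p) / f (a + p)) - F (f' a / f a)) {a..a + p}"
    using \<open>0 \<le> p\<close> by (intro has_integral_comp_log_deriv[OF _ f_deriv f'_deriv F_deriv] nonzero) auto
  moreover have "f' (a + p) = f' a"
    using f_per f_deriv by (rule periodic_derivative)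
  ultimately show ?thesis
    by (simp add: f_per)
qed

theorem proposition2:
  fixes F F' f f' f'' :: "real \<Rightarrow> real"
  assumes F_deriv: "\<And>y. (F has_real_derivative F' y) (at y)"
    and F'_cont: "continuous_on UNIV F'"
    and F_bot: "(F \<longlongrightarrow> -1) at_bot"
    and F_top: "(F \<longlongrightarrow> 1) at_top"
    and f_deriv: "\<And>x. (f has_real_derivative f' x) (at x)"
    and f'_deriv: "\<And>x. (f' has_real_derivative f'' x) (at x)"
    and f''_cont: "continuous_on UNIV f''"
    and f_per: "\<And>x. f (x + 2 * pi) = f x"
    and nondeg: "nondegenerate f f'"
  shows "let Z = {x \<in> {0..<2 * pi}. f x = 0};
             h = (\<lambda>x. F' (f' x / f x) * deriv (\<lambda>y. f' y / f y) x)
         in (Z = {} \<longrightarrow>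
               (\<exists>I. (h has_integral I) {0..2 * pi} \<and> real (card Z) = - (1/2) * I))
          \<and> (Z \<noteq> {} \<longrightarrow>
               (\<exists>I. (\<forall>z\<in>Z. improper_has_integral h (I z) z (next_zero f z))
                    \<and> real (card Z) = - (1/2) * (\<Sum>z\<in>Z. I z)))"
proof -
  define Z where "Z = {x \<in> {0..<2 * pi}. f x = 0}"
  define h where "h = (\<lambda>x. F' (f' x / f x) * deriv (\<lambda>y. f' y / f y) x)"
  have "(h has_integral 0) {0..2 * pi}" if "Z = {}"
  proof -
    have nonzero: "f x \<noteq> 0" if "x \<in> {0..0 + 2 * pi}" for x
      using \<open>Z = {}\<close> that f_per[of 0] unfolding Z_def
      by (cases "x = 2 * pi") auto
    have "(h has_integral 0) {0..0 + 2 * pi}"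
      unfolding h_def
      by (rule has_integral_comp_log_deriv_over_period
          [OF _ F_deriv f_deriv f'_deriv, OF _ f_per nonzero]) simp
    then show ?thesis
      by simp
  qed
  moreover have "improper_has_integral h (-2) z (next_zero f z)" if "z \<in> Z" for z
    unfolding h_def using that pi_gt_zero unfolding Z_def
    by (intro improper_has_integral_between_consecutive_zeros[OF F_deriv F_bot F_top f_deriv
          f'_deriv nondegenerate_simple_zero[OF nondeg], of _ "z + 2 * pi"]) (auto simp: f_per)
  ultimately show ?thesis
    unfolding Let_def Z_def[symmetric] h_def[symmetric]
    by (auto intro!: exI[of _ "\<lambda>_. -2"])
qed

end
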